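(* Let $p\ge1$, $0\le q<2p$, $D_p>0$, $K_q>0$, and suppose that for $0<\epsilon\le\epsilon_0$ and all $B>0$ \[ \Delta_{\mathrm{MSE}}(\epsilon,B)=D_p\epsilon^{2p}-\frac{K_q\epsilon^q}{B}+R_p(\epsilon,B),\qquad |R_p(\epsilon,B)|\le L_b\epsilon^{2p+\delta_b}+L_v\frac{\epsilon^{q+\delta_v}}{B}, \] with $L_b,L_v,\delta_b,\delta_v>0$. Let $C=(K_q/D_p)^{1/(2p-q)}$, $r=1/(2p-q)$, $f_{p,q}(x)=D_px^{2p}-K_qx^q$, fix $0<\rho<1$, set $x_-=(1-\rho)C$, $x_+=(1+\rho)C$, and \[ \mathfrak m_\rho=\min\{K_qx_-^q-D_px_-^{2p},\;D_px_+^{2p}-K_qx_+^q\}>0. \] If \[ B\ge B_0(\rho):=\max\left\{\left(\frac{4L_bx_+^{2p+\delta_b}}{\mathfrak m_\rho}\right)^{1/(r\delta_b)},\left(\frac{4L_vx_+^{q+\delta_v}}{\mathfrak m_\rho}\right)^{1/(r\delta_v)},\left(\frac{x_+}{\epsilon_0}\right)^{1/r}\right\}, \] then $\Delta_{\mathrm{MSE}}(x_-B^{-r},B)<0$ and $\Delta_{\mathrm{MSE}}(x_+B^{-r},B)>0$; consequently at least one sign-changing crossing $\epsilon^*_{\mathrm{loc}}(B)$ of $\Delta_{\mathrm{MSE}}(\cdot,B)$ lies in \[ (1-\rho)CB^{-r}\le\epsilon^*_{\mathrm{loc}}(B)\le(1+\rho)CB^{-r}. \] If in addition $f_{p,q}'>0$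 on $[x_-,x_+]$ and the $x$-derivative of the rescaled remainder $\eta_B(x)=B^{2pr}R_p(xB^{-r},B)$ is bounded in absolute value on $[x_-,x_+]$ by less than half of $\min_{[x_-,x_+]}f'_{p,q}$, then the crossing in this bracket is unique.
   Context: $\Delta_{\mathrm{MSE}}(\epsilon,B)$ is the mean-squared-error difference (unmitigated minus zero-noise-extrapolated) at noise strength $\epsilon$ and total shot budget $B$. *)

theory Defs
  imports Complex_Main
begin

definition sign_crossing :: "(real \<Rightarrow> real) \<Rightarrow> real \<Rightarrow> bool" where
  "sign_crossing h e \<longleftrightarrow> h e = 0 \<and>
     (\<forall>d>0. \<exists>u. e - d < u \<and> u < e \<and> h u < 0) \<and>
     (\<forall>d>0. \<exists>v. e < v \<and> v < e + d \<and> h v \<ge> 0)"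

end

theory Submission
  imports Defs "HOL-Analysis.Analysis"
begin

(* Substituting e = x B^(-r) and multiplying by B^(2pr) turns Delta(e, B) into
   f x + eta_B x with f x = Dp x^(2p) - Kq x^q: since r (2p - q) = 1 both leading terms
   scale alike, while the two remainder terms pick up the decaying factors B^(-r db) and
   B^(-r dv). As f changes sign at C = (Kq/Dp)^r, it is at most -m at x_- and at least m
   at x_+, and for B >= B0 the rescaled remainder is at most m/2 on (0, x_+]. So Delta has
   the signs of f at the ends of the bracket, and an intermediate value argument gives a
   crossing. If f' dominates the derivative of eta_B, then f + eta_B is strictly increasing
   on the bracket and has only one zero there. *)

lemma sign_crossing_exists:
  fixes h :: "real \<Rightarrow> real"
  assumes "a < b" and cont: "continuous_on {a..b} h" and "h a < 0" and "0 < h b"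
  shows "\<exists>e. a \<le> e \<and> e \<le> b \<and> sign_crossing h e"
proof -
  \<comment> \<open>The supremum of the negative set, not an arbitrary zero: this guarantees negative values
    immediately to the left.\<close>
  define S where "S = {t \<in> {a..b}. h t < 0}"
  define e where "e = Sup S"
  have "a \<in> S" using assms by (auto simp: S_def)
  then have S_ne: "S \<noteq> {}" by auto
  have S_bdd: "bdd_above S" by (rule bdd_aboveI[of _ b]) (auto simp: S_def)
  have le_e: "t \<le> e" if "t \<in> S" for t unfolding e_def using that S_bdd by (rule cSup_upper)
  have "a \<le> e" using \<open>a \<in> S\<close> by (rule le_e)
  have "e \<le> b" unfolding e_def using S_ne by (rule cSup_least) (auto simp: S_def)
  have "e \<in> {t \<in> {a..b}. h t \<le> 0}"
    unfolding e_def using cont S_ne S_bdd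
    by (intro closed_subset_contains_Sup continuous_on_closed_Collect_le) (auto simp: S_def)
  then have "e < b" using \<open>0 < h b\<close> by (cases "e = b") auto
  have "{e<..b} \<subseteq> {t \<in> {e..b}. 0 \<le> h t}"
  proof
    fix t assume "t \<in> {e<..b}"
    then have "t \<notin> S" using le_e by force
    with \<open>t \<in> {e<..b}\<close> \<open>a \<le> e\<close> show "t \<in> {t \<in> {e..b}. 0 \<le> h t}" by (auto simp: S_def)
  qed
  moreover have "closed {t \<in> {e..b}. 0 \<le> h t}"
    using cont \<open>a \<le> e\<close> by (intro continuous_on_closed_Collect_le) (auto elim: continuous_on_subset)
  ultimately have "closure {e<..b} \<subseteq> {t \<in> {e..b}. 0 \<le> h t}"
    by (rule closure_minimal)
  then have "0 \<le> h e" using \<open>e < b\<close> by force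
  with \<open>e \<in> {t \<in> {a..b}. h t \<le> 0}\<close> have "h e = 0" by simp
  moreover have "\<exists>u. e - d < u \<and> u < e \<and> h u < 0" if "0 < d" for d
  proof -
    have "e - d < Sup S" using \<open>0 < d\<close> by (simp add: e_def)
    then obtain u where "u \<in> S" "e - d < u" using S_ne by (rule less_cSupE)
    with le_e[of u] \<open>h e = 0\<close> show ?thesis by (auto simp: S_def order.order_iff_strict)
  qed
  moreover have "\<exists>v. e < v \<and> v < e + d \<and> 0 \<le> h v" if "0 < d" for d
  proof -
    define v where "v = min b (e + d / 2)"
    have "e < v" "v < e + d" "v \<in> {a..b}" using \<open>e < b\<close> \<open>a \<le> e\<close> that by (auto simp: v_def)
    with le_e[of v] show ?thesis by (force simp: S_def)
  qed
  ultimately show ?thesis using \<open>a \<le> e\<close> \<open>e \<le> b\<close> unfolding sign_crossing_def by blast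
qed

lemma DERIV_pos_imp_strict_mono_on:
  fixes g g' :: "real \<Rightarrow> real"
  assumes deriv: "\<And>x. x \<in> {a..b} \<Longrightarrow> (g has_real_derivative g' x) (at x within {a..b})"
    and pos: "\<And>x. x \<in> {a..b} \<Longrightarrow> 0 < g' x"
  shows "strict_mono_on {a..b} g"
proof (rule strict_mono_onI)
  fix x y assume "x \<in> {a..b}" "y \<in> {a..b}" "x < y"
  show "g x < g y"
  proof (rule DERIV_pos_imp_increasing_open[OF \<open>x < y\<close>])
    fix z assume "x < z" "z < y"
    then have "z \<in> {a..b}" and "at z within {a..b} = at z"
      using \<open>x \<in> {a..b}\<close> \<open>y \<in> {a..b}\<close> by (auto intro: at_within_Icc_at)
    then show "\<exists>l. (g has_real_derivative l) (at z) \<and> 0 < l"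
      using deriv pos by metis
  next
    have "continuous_on {a..b} g" using deriv by (rule DERIV_continuous_on)
    then show "continuous_on {x..y} g"
      by (rule continuous_on_subset) (use \<open>x \<in> {a..b}\<close> \<open>y \<in> {a..b}\<close> in auto)
  qed
qed

lemma powr_diff_powr_neg:
  fixes a q D K x :: real
  assumes "q < a" "0 < D" "0 < K" "0 < x" "x < (K / D) powr (1 / (a - q))"
  shows "D * x powr a - K * x powr q < 0"
proof -
  have "x powr (a - q) < ((K / D) powr (1 / (a - q))) powr (a - q)"
    using assms by (intro powr_less_mono2) auto
  also have "\<dots> = K / D" using assms by (simp add: powr_powr)
  finally have "x powr q * (D * x powr (a - q)) < x powr q * K"
    using assms by (simp add: field_simps)
  then show ?thesis using \<open>0 < x\<close> by (simp add: powr_diff field_simps)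
qed

lemma powr_diff_powr_pos:
  fixes a q D K x :: real
  assumes "q < a" "0 < D" "0 < K" "(K / D) powr (1 / (a - q)) < x"
  shows "0 < D * x powr a - K * x powr q"
proof -
  have "0 < x" using assms(4) by (smt (verit) powr_ge_zero)
  have "K / D = ((K / D) powr (1 / (a - q))) powr (a - q)" using assms by (simp add: powr_powr)
  also have "\<dots> < x powr (a - q)" using assms by (intro powr_less_mono2) auto
  finally have "x powr q * K < x powr q * (D * x powr (a - q))"
    using assms \<open>0 < x\<close> by (simp add: field_simps)
  then show ?thesis using \<open>0 < x\<close> by (simp add: powr_diff field_simps)
qed

lemma mult_powr_neg_le:
  fixes c c0 m k B :: real
  assumes "0 < m" "0 < k" "0 < B" "0 \<le> c" "c \<le> c0" "(c0 / m) powr (1 / k) \<le> B"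
  shows "c * B powr (- k) \<le> m"
proof -
  have "c0 / m = ((c0 / m) powr (1 / k)) powr k" using assms by (simp add: powr_powr)
  also have "\<dots> \<le> B powr k" using assms by (intro powr_mono2) auto
  finally have "c \<le> m * B powr k" using assms by (simp add: field_simps)
  then show ?thesis using assms by (simp add: powr_minus field_simps)
qed

lemma powr_rescale:
  fixes y B r c a :: real
  assumes "0 < y" "0 < B"
  shows "B powr c * (y * B powr (- r)) powr a = y powr a * B powr (c - r * a)"
proof -
  have "(y * B powr (- r)) powr a = y powr a * B powr (- r * a)"
    using assms by (simp add: powr_mult powr_powr)
  then show ?thesis by (simp add: powr_add[symmetric])
qed

locale zne_bracket =
  fixes Delta R :: "real \<Rightarrow> real \<Rightarrow> real"
    and p q Dp Kq eps0 Lb Lv db dv B xm xp r m :: real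
  assumes q: "0 \<le> q" "q < 2 * p"
    and Dp: "0 < Dp" and Kq: "0 < Kq" and eps0: "0 < eps0"
    and L: "0 \<le> Lb" "0 \<le> Lv" "0 < db" "0 < dv"
    and expand: "\<And>e. 0 < e \<Longrightarrow> e \<le> eps0 \<Longrightarrow>
        Delta e B = Dp * e powr (2 * p) - Kq * e powr q / B + R e B"
    and remainder: "\<And>e. 0 < e \<Longrightarrow> e \<le> eps0 \<Longrightarrow>
        \<bar>R e B\<bar> \<le> Lb * e powr (2 * p + db) + Lv * e powr (q + dv) / B"
    and cont: "continuous_on {0<..eps0} (\<lambda>e. Delta e B)"
    and r_def: "r = 1 / (2 * p - q)"
    and bracket: "0 < xm" "xm < (Kq / Dp) powr r" "(Kq / Dp) powr r < xp"
    and m_def: "m = min (Kq * xm powr q - Dp * xm powr (2 * p)) (Dp * xp powr (2 * p) - Kq * xp powr q)"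
    and B_ge: "(4 * Lb * xp powr (2 * p + db) / m) powr (1 / (r * db)) \<le> B"
      "(4 * Lv * xp powr (q + dv) / m) powr (1 / (r * dv)) \<le> B"
      "(xp / eps0) powr (1 / r) \<le> B"
begin

definition f :: "real \<Rightarrow> real" where
  "f x = Dp * x powr (2 * p) - Kq * x powr q"

definition eta :: "real \<Rightarrow> real" where
  "eta y = B powr (2 * p * r) * R (y * B powr (- r)) B"

lemma r_pos: "0 < r" and r_mult: "r * (2 * p - q) = 1"
  using q by (auto simp: r_def)

lemma xm_less_xp: "xm < xp"
  using bracket by linarith

lemma f_xm_neg: "f xm < 0"
  using powr_diff_powr_neg[of q "2 * p" Dp Kq xm] q Dp Kq bracket by (simp add: f_def r_def)

lemma f_xp_pos: "0 < f xp"
  using powr_diff_powr_pos[of q "2 * p" Dp Kq xp] q Dp Kq bracket by (simp add: f_def r_def)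

lemma m_pos: "0 < m"
  using f_xm_neg f_xp_pos by (simp add: m_def f_def)

lemma B_pos: "0 < B"
  using B_ge(3) bracket eps0 xm_less_xp by (smt (verit) powr_gt_zero divide_pos_pos)

lemma scaled_le_eps0:
  assumes "y \<le> xp"
  shows "y * B powr (- r) \<le> eps0"
proof -
  have "xp / eps0 = ((xp / eps0) powr (1 / r)) powr r"
    using bracket xm_less_xp eps0 r_pos by (simp add: powr_powr)
  also have "\<dots> \<le> B powr r"
    using B_ge(3) r_pos by (intro powr_mono2) auto
  finally have "xp * B powr (- r) \<le> eps0"
    using eps0 B_pos by (simp add: powr_minus field_simps)
  then show ?thesis using assms B_pos by (smt (verit) mult_right_mono powr_ge_zero)
qed

lemma Delta_rescaled:
  assumes "0 < y" "y \<le> xp"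
  shows "B powr (2 * p * r) * Delta (y * B powr (- r)) B = f y + eta y"
proof -
  have "B powr (2 * p * r) * Delta (y * B powr (- r)) B
      = Dp * (B powr (2 * p * r) * (y * B powr (- r)) powr (2 * p))
        - Kq * (B powr (2 * p * r) * (y * B powr (- r)) powr q) / B + eta y"
    using expand[of "y * B powr (- r)"] assms B_pos scaled_le_eps0
    by (simp add: eta_def right_diff_distrib distrib_left mult.left_commute)
  also have "\<dots> = Dp * y powr (2 * p) - Kq * (y powr q * B powr 1) / B + eta y"
    using assms B_pos r_mult by (simp add: powr_rescale algebra_simps)
  also have "\<dots> = f y + eta y"
    using B_pos by (simp add: f_def)
  finally show ?thesis .
qed

lemma eta_bound:
  assumes "0 < y" "y \<le> xp"
  shows "\<bar>eta y\<bar> \<le> m / 2"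
proof -
  have "\<bar>eta y\<bar> \<le> B powr (2 * p * r) * (Lb * (y * B powr (- r)) powr (2 * p + db)
        + Lv * (y * B powr (- r)) powr (q + dv) / B)"
    using remainder[of "y * B powr (- r)"] assms B_pos scaled_le_eps0
    by (auto simp: eta_def abs_mult intro: mult_left_mono)
  also have "\<dots> = Lb * y powr (2 * p + db) * B powr (- (r * db))
      + Lv * y powr (q + dv) * B powr (1 - (r * dv)) / B"
    using assms B_pos r_mult by (simp add: powr_rescale algebra_simps)
  also have "\<dots> = (4 * Lb * y powr (2 * p + db)) * B powr (- (r * db)) / 4
      + (4 * Lv * y powr (q + dv)) * B powr (- (r * dv)) / 4"
    using B_pos by (simp add: powr_diff powr_minus field_simps)
  also have "\<dots> \<le> m / 4 + m / 4"
  proof (intro add_mono divide_right_mono)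
    show "(4 * Lb * y powr (2 * p + db)) * B powr (- (r * db)) \<le> m"
      using m_pos r_pos L B_pos q assms
      by (intro mult_powr_neg_le[OF _ _ _ _ _ B_ge(1)] mult_left_mono powr_mono2) auto
    show "(4 * Lv * y powr (q + dv)) * B powr (- (r * dv)) \<le> m"
      using m_pos r_pos L B_pos q assms
      by (intro mult_powr_neg_le[OF _ _ _ _ _ B_ge(2)] mult_left_mono powr_mono2) auto
  qed auto
  finally show ?thesis by simp
qed

lemma Delta_xm_neg: "Delta (xm * B powr (- r)) B < 0"
proof -
  have "f xm \<le> - m" by (simp add: m_def f_def)
  then have "B powr (2 * p * r) * Delta (xm * B powr (- r)) B < 0"
    using Delta_rescaled[of xm] eta_bound[of xm] bracket xm_less_xp m_pos by simp
  then show ?thesis using B_pos by (simp add: mult_less_0_iff)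
qed

lemma Delta_xp_pos: "0 < Delta (xp * B powr (- r)) B"
proof -
  have "m \<le> f xp" by (simp add: m_def f_def)
  then have "0 < B powr (2 * p * r) * Delta (xp * B powr (- r)) B"
    using Delta_rescaled[of xp] eta_bound[of xp] bracket xm_less_xp m_pos by simp
  then show ?thesis using B_pos by (simp add: zero_less_mult_iff)
qed

lemma crossing_exists:
  "\<exists>e. xm * B powr (- r) \<le> e \<and> e \<le> xp * B powr (- r) \<and> sign_crossing (\<lambda>e'. Delta e' B) e"
proof (rule sign_crossing_exists)
  have "0 < xm * B powr (- r)" using bracket B_pos by simp
  then have "{xm * B powr (- r)..xp * B powr (- r)} \<subseteq> {0<..eps0}"
    using scaled_le_eps0[of xp] by auto
  then show "continuous_on {xm * B powr (- r)..xp * B powr (- r)} (\<lambda>e. Delta e B)"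
    using cont by (rule continuous_on_subset[rotated])
qed (use xm_less_xp B_pos Delta_xm_neg Delta_xp_pos in auto)

lemma f_has_real_derivative:
  assumes "0 < x"
  shows "(f has_real_derivative 2 * p * Dp * x powr (2 * p - 1) - q * Kq * x powr (q - 1)) (at x)"
  using assms unfolding f_def[abs_def]
  by (auto intro!: derivative_eq_intros simp: algebra_simps)

lemma Delta_zero_rescaled:
  assumes "xm * B powr (- r) \<le> e" "e \<le> xp * B powr (- r)" "Delta e B = 0"
  shows "e * B powr r \<in> {xm..xp}" "f (e * B powr r) + eta (e * B powr r) = 0"
proof -
  have unscale: "B powr (- r) * B powr r = 1"
    using B_pos by (simp add: powr_add[symmetric])
  have "xm * (B powr (- r) * B powr r) \<le> e * B powr r" "e * B powr r \<le> xp * (B powr (- r) * B powr r)"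
    using assms(1,2) by (auto simp: mult.assoc[symmetric] intro: mult_right_mono)
  then show in_bracket: "e * B powr r \<in> {xm..xp}" by (simp add: unscale)
  have "e * B powr r * B powr (- r) = e * (B powr (- r) * B powr r)" by (simp only: mult_ac)
  then have unscaled: "e * B powr r * B powr (- r) = e" by (simp add: unscale)
  have "f (e * B powr r) + eta (e * B powr r)
      = B powr (2 * p * r) * Delta (e * B powr r * B powr (- r)) B"
    using Delta_rescaled[of "e * B powr r"] in_bracket bracket by simp
  also have "\<dots> = 0" by (simp only: unscaled assms(3) mult_zero_right)
  finally show "f (e * B powr r) + eta (e * B powr r) = 0" .
qed

lemma crossing_unique:
  assumes f': "\<And>x. x \<in> {xm..xp} \<Longrightarrow> (f has_real_derivative f' x) (at x)"
      "\<And>x. x \<in> {xm..xp} \<Longrightarrow> 0 < f' x"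
    and eta': "\<And>x. x \<in> {xm..xp} \<Longrightarrow> (eta has_real_derivative eta' x) (at x within {xm..xp})"
      "\<And>x. x \<in> {xm..xp} \<Longrightarrow> \<bar>eta' x\<bar> \<le> M"
    and M: "M < (INF x\<in>{xm..xp}. f' x)"
  shows "\<exists>!e. xm * B powr (- r) \<le> e \<and> e \<le> xp * B powr (- r) \<and> sign_crossing (\<lambda>e'. Delta e' B) e"
proof (rule ex_ex1I)
  have "strict_mono_on {xm..xp} (\<lambda>y. f y + eta y)"
  proof (rule DERIV_pos_imp_strict_mono_on)
    fix x assume x: "x \<in> {xm..xp}"
    show "((\<lambda>y. f y + eta y) has_real_derivative f' x + eta' x) (at x within {xm..xp})"
      using has_field_derivative_at_within[OF f'(1)[OF x]] eta'(1)[OF x] by (rule DERIV_add)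
    have "(INF x\<in>{xm..xp}. f' x) \<le> f' x"
      using f'(2) x by (intro cINF_lower bdd_belowI2[of _ 0]) (auto intro: less_imp_le)
    then show "0 < f' x + eta' x" using eta'(2)[OF x] M by linarith
  qed
  then have inj: "inj_on (\<lambda>y. f y + eta y) {xm..xp}"
    by (rule strict_mono_on_imp_inj_on)
  fix e1 e2
  assume "xm * B powr (- r) \<le> e1 \<and> e1 \<le> xp * B powr (- r) \<and> sign_crossing (\<lambda>e'. Delta e' B) e1"
    and "xm * B powr (- r) \<le> e2 \<and> e2 \<le> xp * B powr (- r) \<and> sign_crossing (\<lambda>e'. Delta e' B) e2"
  then have "e1 * B powr r = e2 * B powr r"
    using Delta_zero_rescaled inj_onD[OF inj] unfolding sign_crossing_def by (metis (no_types, lifting))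
  then show "e1 = e2" using B_pos by simp
qed (rule crossing_exists)

end

theorem proposition7:
  fixes Delta R :: "real \<Rightarrow> real \<Rightarrow> real"
    and p q Dp Kq eps0 Lb Lv db dv rho B C r xm xp m B0 :: real
    and f' :: "real \<Rightarrow> real"
  assumes p: "p \<ge> 1" and q: "0 \<le> q" "q < 2 * p"
    and Dp: "Dp > 0" and Kq: "Kq > 0" and eps0: "eps0 > 0"
    and L: "Lb > 0" "Lv > 0" "db > 0" "dv > 0"
    and expand: "\<And>e B. 0 < e \<Longrightarrow> e \<le> eps0 \<Longrightarrow> B > 0 \<Longrightarrow>
        Delta e B = Dp * e powr (2 * p) - Kq * e powr q / B + R e B"
    and remainder: "\<And>e B. 0 < e \<Longrightarrow> e \<le> eps0 \<Longrightarrow> B > 0 \<Longrightarrow>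
        \<bar>R e B\<bar> \<le> Lb * e powr (2 * p + db) + Lv * e powr (q + dv) / B"
    and cont: "\<And>B. B > 0 \<Longrightarrow> continuous_on {0<..eps0} (\<lambda>e. Delta e B)"
    and rho: "0 < rho" "rho < 1"
  assumes C_def: "C = (Kq / Dp) powr (1 / (2 * p - q))"
    and r_def: "r = 1 / (2 * p - q)"
    and f'_def: "f' = (\<lambda>x. 2 * p * Dp * x powr (2 * p - 1) - q * Kq * x powr (q - 1))"
    and xm_def: "xm = (1 - rho) * C"
    and xp_def: "xp = (1 + rho) * C"
    and m_def: "m = min (Kq * xm powr q - Dp * xm powr (2 * p)) (Dp * xp powr (2 * p) - Kq * xp powr q)"
    and B0_def: "B0 = Max {(4 * Lb * xp powr (2 * p + db) / m) powr (1 / (r * db)),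
                    (4 * Lv * xp powr (q + dv) / m) powr (1 / (r * dv)),
                    (xp / eps0) powr (1 / r)}"
    and B: "B \<ge> B0"
  shows "m > 0
    \<and> Delta (xm * B powr (- r)) B < 0
    \<and> Delta (xp * B powr (- r)) B > 0
    \<and> (\<exists>e. xm * B powr (- r) \<le> e \<and> e \<le> xp * B powr (- r) \<and> sign_crossing (\<lambda>e'. Delta e' B) e)
    \<and> (((\<forall>x\<in>{xm..xp}. f' x > 0) \<and>
         (\<exists>eta' M. (\<forall>x\<in>{xm..xp}.
              ((\<lambda>y. B powr (2 * p * r) * R (y * B powr (- r)) B) has_real_derivative eta' x)
                 (at x within {xm..xp}) \<and> \<bar>eta' x\<bar> \<le> M)
            \<and> M < (INF x\<in>{xm..xp}. f' x) / 2))
       \<longrightarrow> (\<exists>!e. xm * B powr (- r) \<le> e \<and> e \<le> xp * B powr (- r) \<and> sign_crossing (\<lambda>e'. Delta e' B) e))"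
proof -
  have C_pos: "0 < C" using Kq Dp by (simp add: C_def)
  have bracket: "0 < xm" "xm < (Kq / Dp) powr r" "(Kq / Dp) powr r < xp"
    using C_pos rho by (auto simp: xm_def xp_def C_def r_def)
  have B_ge: "(4 * Lb * xp powr (2 * p + db) / m) powr (1 / (r * db)) \<le> B"
      "(4 * Lv * xp powr (q + dv) / m) powr (1 / (r * dv)) \<le> B"
      "(xp / eps0) powr (1 / r) \<le> B"
    using B by (simp_all add: B0_def)
  have "0 < B" using B_ge(3) bracket eps0 by (smt (verit) powr_gt_zero divide_pos_pos)
  interpret zne_bracket Delta R p q Dp Kq eps0 Lb Lv db dv B xm xp r m
    using q Dp Kq eps0 L expand remainder cont \<open>0 < B\<close> r_def bracket m_def B_ge
    by unfold_locales auto
  have "\<exists>!e. xm * B powr (- r) \<le> e \<and> e \<le> xp * B powr (- r) \<and> sign_crossing (\<lambda>e'. Delta e' B) e"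
    if f'_pos: "\<forall>x\<in>{xm..xp}. f' x > 0"
      and eta': "\<forall>x\<in>{xm..xp}. (eta has_real_derivative eta' x) (at x within {xm..xp}) \<and> \<bar>eta' x\<bar> \<le> M"
      and M: "M < (INF x\<in>{xm..xp}. f' x) / 2" for eta' M
  proof (rule crossing_unique[of f' eta' M])
    show "(f has_real_derivative f' x) (at x)" if "x \<in> {xm..xp}" for x
      using f_has_real_derivative[of x] that bracket by (simp add: f'_def)
    \<comment> \<open>The factor 1/2 in the hypothesis is slack.\<close>
    have "0 \<le> M" using eta' xm_less_xp by force
    with M show "M < (INF x\<in>{xm..xp}. f' x)" by linarith
  qed (use f'_pos eta' in auto)
  then show ?thesis
    using m_pos Delta_xm_neg Delta_xp_pos crossing_exists unfolding eta_def[abs_def] by blast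
qed

end
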